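(* There exist polynomials $p_n(k)\in\mathbb{Q}[k]$, $n\geq0$, with $\deg p_n=2n$, such that for all integers $k\geq0$, \[ \left[ \sqrt{ \wp(p,q) - 4G_2(q) }^{\,2k+1} \right]_{p^0} = \frac{1}{2^{2k+1}}\sum_{n \geq 0} p_n(k)\, q^n. \]
   Context: For even $k\geq2$, $G_k(q)=-\frac{B_k}{2k}+\sum_{n\geq1}\sum_{d|n}d^{k-1}q^n$, in particular $G_2=-\frac1{24}+\sum_{n\geq1}\sigma_1(n)q^n$. Set $\wp(p,q)=\frac{1}{12}+\frac{p}{(1-p)^2}+\sum_{d\geq1}\sum_{k|d}k(p^k-2+p^{-k})q^d$, a power series in $q$ whose coefficients are rational functions of $p$; then $\wp(p,q)-4G_2(q)=\frac14\frac{(p+1)^2}{(p-1)^2}+O(q)$. $\sqrt{\wp(p,q)-4G_2(q)}$ denotes the unique power series in $q$ with coefficients rational functions of $p$ whose square is $\wp(p,q)-4G_2(q)$ and whose $q^0$-coefficient is $\frac12\frac{p+1}{p-1}$. For a power series in $q$ with rational-function coefficients in $p$ (with poles only at $p\in\{0,\pm1\}$), $[\cdot]_{p^0}$ expands each $q$-coefficient as a Laurent series in $p^{-1}$ (i.e. in the region $|p|>1$) and takes its constant term, giving a power series in $q$. *)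

theory Defs
  imports "HOL-Computational_Algebra.Computational_Algebra"
begin

text \<open>Coefficient field for q-series: formal Laurent series in the variable p^(-1)
  (finitely many negative powers of p^(-1)) over the rationals.  The variable p itself is
  the element fls_X_inv; a rational function of p evaluated in this field is exactly its
  Laurent expansion in the region |p| > 1.\<close>

abbreviation pvar :: "rat fls" where "pvar \<equiv> fls_X_inv"

definition sigma1 :: "nat \<Rightarrow> nat" where
  "sigma1 n = (\<Sum>d | d dvd n. d)"

definition G2 :: "'a::field_char_0 fps" where
  "G2 = Abs_fps (\<lambda>n. if n = 0 then - 1 / 24 else of_nat (sigma1 n))"

definition wp :: "rat fls fps" where
  "wp = Abs_fps (\<lambda>d. if d = 0 then 1 / 12 + pvar / (1 - pvar)\<^sup>2
        else (\<Sum>k | k dvd d. of_nat k * (pvar ^ k - 2 + inverse pvar ^ k)))"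

definition sqrtW :: "rat fls fps" where
  "sqrtW = (THE S. S\<^sup>2 = wp - 4 * G2 \<and> fps_nth S 0 = (1 / 2) * (pvar + 1) / (pvar - 1))"

definition const_p :: "rat fls fps \<Rightarrow> rat fps" where
  "const_p F = Abs_fps (\<lambda>n. fls_nth (fps_nth F n) 0)"

end

theory Submission
  imports Defs
begin

text \<open>Write \<open>x = p\<^sup>-\<^sup>1\<close>, let \<open>T = 2 \<surd>(\<wp> - 4 G\<^sub>2)\<close> and \<open>Z = T\<^sup>2 - 1 = 4 (\<wp> - 4 G\<^sub>2) - 1\<close>, and give
  \<open>x\<close> weight 1 and \<open>q\<close> weight 2. Then \<open>Z\<close> and \<open>T - 1\<close> only contain monomials of weight at least 1,
  so in \<open>2\<^bsup>2k+1\<^esup> \<surd>(\<wp> - 4 G\<^sub>2)\<^bsup>2k+1\<^esup> = T (1 + Z)\<^sup>k = \<Sum>\<^sub>i (k choose i) T Z\<^sup>i\<close> the \<open>p\<^sup>0 q\<^sup>n\<close>-coefficient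
  \<open>c\<^sub>n\<^sub>,\<^sub>i\<close> of \<open>T Z\<^sup>i\<close> vanishes for \<open>i > 2n\<close>. The \<open>p\<^sup>0 q\<^sup>n\<close>-coefficient of the left side is therefore
  \<open>\<Sum>\<^sub>i\<^sub>\<le>\<^sub>2\<^sub>n c\<^sub>n\<^sub>,\<^sub>i (k choose i)\<close>, a polynomial in \<open>k\<close> of degree at most \<open>2n\<close>. Modulo weight \<open>2n + 1\<close>,
  \<open>T Z\<^bsup>2n\<^esup>\<close> agrees with \<open>(4x + 4pq)\<^bsup>2n\<^esup>\<close>, whose \<open>p\<^sup>0 q\<^sup>n\<close>-coefficient is \<open>(2n choose n) 16\<^sup>n \<noteq> 0\<close>;
  so the degree is exactly \<open>2n\<close>.\<close>

unbundle fps_syntax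

section \<open>Order in \<open>p\<^sup>-\<^sup>1\<close> and a weight filtration\<close>

definition fls_order_ge :: "'a::zero fls \<Rightarrow> int \<Rightarrow> bool" where
  "fls_order_ge f a \<longleftrightarrow> (\<forall>k<a. f $$ k = 0)"

lemma fls_order_ge_iff_subdegree: "fls_order_ge f a \<longleftrightarrow> f = 0 \<or> a \<le> fls_subdegree f"
  unfolding fls_order_ge_def
  by (metis fls_eq0_below_subdegree fls_zero_nth linorder_not_le
      nth_fls_subdegree_nonzero order_less_le_trans)

lemma fls_order_ge_mono: "fls_order_ge f a \<Longrightarrow> b \<le> a \<Longrightarrow> fls_order_ge f b"
  unfolding fls_order_ge_def by simp

lemma fls_order_ge_0 [simp]: "fls_order_ge 0 a"
  unfolding fls_order_ge_def by simp

lemma fls_order_ge_add: "fls_order_ge f a \<Longrightarrow> fls_order_ge g a \<Longrightarrow> fls_order_ge (f + g) a"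
  unfolding fls_order_ge_def by simp

lemma fls_order_ge_diff:
  fixes f g :: "'a::group_add fls"
  shows "fls_order_ge f a \<Longrightarrow> fls_order_ge g a \<Longrightarrow> fls_order_ge (f - g) a"
  unfolding fls_order_ge_def by simp

lemma fls_order_ge_sum:
  "(\<And>i. i \<in> A \<Longrightarrow> fls_order_ge (f i) a) \<Longrightarrow> fls_order_ge (\<Sum>i\<in>A. f i) a"
  unfolding fls_order_ge_def by (simp add: fls_nth_sum)

lemma fls_order_ge_mult:
  fixes f g :: "'a::semiring_no_zero_divisors fls"
  shows "fls_order_ge f a \<Longrightarrow> fls_order_ge g b \<Longrightarrow> fls_order_ge (f * g) (a + b)"
  unfolding fls_order_ge_iff_subdegree by (metis add_mono fls_subdegree_mult mult_eq_0_iff)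

lemma fls_order_ge_inverse:
  fixes f :: "'a::division_ring fls"
  assumes "fls_order_ge f 0" and "f $$ 0 \<noteq> 0"
  shows "fls_order_ge (inverse f) 0"
proof -
  have "fls_subdegree f = 0"
    using assms by (metis fls_order_ge_iff_subdegree fls_subdegree_leI fls_zero_nth order_antisym)
  then show ?thesis unfolding fls_order_ge_iff_subdegree by simp
qed

lemma fls_order_ge_1 [simp]: "fls_order_ge 1 0"
  and fls_order_ge_of_nat [simp]: "fls_order_ge (of_nat m) 0"
  and fls_order_ge_numeral [simp]: "fls_order_ge (numeral n) 0"
  unfolding fls_order_ge_def by (simp_all add: fls_of_nat_nth)

lemma fls_order_ge_X_power [simp]: "fls_order_ge (fls_X ^ m) (int m)"
  and fls_order_ge_X_inv_power [simp]: "fls_order_ge (fls_X_inv ^ m) (- int m)"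
  unfolding fls_order_ge_iff_subdegree by simp_all

lemma fls_order_ge_X [simp]: "fls_order_ge (fls_X :: 'a::zero_neq_one fls) 1"
  unfolding fls_order_ge_iff_subdegree by simp

lemma fls_order_ge_power:
  fixes f :: "'a::{semiring_1, semiring_no_zero_divisors} fls"
  assumes "fls_order_ge f a"
  shows "fls_order_ge (f ^ m) (int m * a)"
proof (induction m)
  case (Suc m)
  then show ?case
    using fls_order_ge_mult[OF assms Suc.IH] by (simp add: algebra_simps)
qed simp

definition weight_ge :: "int \<Rightarrow> 'a::zero fls fps \<Rightarrow> bool" where
  "weight_ge w F \<longleftrightarrow> (\<forall>n. fls_order_ge (F $ n) (w - 2 * int n))"

lemma weight_ge_nth_eq_0: "weight_ge w F \<Longrightarrow> k + 2 * int n < w \<Longrightarrow> F $ n $$ k = 0"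
  unfolding weight_ge_def fls_order_ge_def by auto

lemma weight_ge_mono: "weight_ge a F \<Longrightarrow> b \<le> a \<Longrightarrow> weight_ge b F"
  unfolding weight_ge_def by (meson diff_right_mono fls_order_ge_mono)

lemma weight_ge_add: "weight_ge a F \<Longrightarrow> weight_ge a G \<Longrightarrow> weight_ge a (F + G)"
  unfolding weight_ge_def by (simp add: fls_order_ge_add)

lemma weight_ge_1: "weight_ge 0 (1 :: 'a::zero_neq_one fls fps)"
  unfolding weight_ge_def fls_order_ge_def by simp

lemma weight_ge_mult:
  fixes F G :: "'a::idom fls fps"
  assumes "weight_ge a F" and "weight_ge b G"
  shows "weight_ge (a + b) (F * G)"
  unfolding weight_ge_def fps_mult_nth
proof (intro allI fls_order_ge_sum)
  fix n i :: nat assume "i \<in> {0..n}"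
  then have "a + b - 2 * int n = (a - 2 * int i) + (b - 2 * int (n - i))"
    by auto
  then show "fls_order_ge (F $ i * G $ (n - i)) (a + b - 2 * int n)"
    using assms unfolding weight_ge_def by (metis fls_order_ge_mult)
qed

lemma weight_ge_power:
  fixes F :: "'a::idom fls fps"
  assumes "weight_ge a F"
  shows "weight_ge (int m * a) (F ^ m)"
proof (induction m)
  case 0
  then show ?case by (simp add: weight_ge_1)
next
  case (Suc m)
  then show ?case
    using weight_ge_mult[OF assms Suc.IH] by (simp add: algebra_simps)
qed

lemma weight_ge_power_diff:
  fixes F G :: "'a::idom fls fps"
  assumes F: "weight_ge a F" and G: "weight_ge a G" and FG: "weight_ge (a + 1) (F - G)"
  shows "weight_ge (int m * a + 1) (F ^ m - G ^ m)"
proof (induction m)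
  case 0
  then show ?case by (simp add: weight_ge_def)
next
  case (Suc m)
  have "F ^ Suc m - G ^ Suc m = F * (F ^ m - G ^ m) + (F - G) * G ^ m"
    by (simp add: algebra_simps)
  moreover have "weight_ge (a + (int m * a + 1)) (F * (F ^ m - G ^ m))"
    using F Suc.IH by (rule weight_ge_mult)
  moreover have "weight_ge ((a + 1) + int m * a) ((F - G) * G ^ m)"
    using FG weight_ge_power[OF G] by (rule weight_ge_mult)
  moreover have "(a + 1) + int m * a = a + (int m * a + 1)" "int (Suc m) * a + 1 = a + (int m * a + 1)"
    by (simp_all add: algebra_simps)
  ultimately show ?case
    by (metis weight_ge_add)
qed

lemma fps_square_nth:
  fixes S :: "'a::comm_semiring_1 fps"
  assumes "n > 0"
  shows "(S ^ 2) $ n = 2 * S $ 0 * S $ n + (\<Sum>i\<in>{1..n-1}. S $ i * S $ (n - i))"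
proof -
  have "{0..n} = insert 0 (insert n {1..n-1})"
    using assms by auto
  then have "(S ^ 2) $ n = S $ 0 * S $ n + (S $ n * S $ 0 + (\<Sum>i\<in>{1..n-1}. S $ i * S $ (n - i)))"
    using assms by (simp add: power2_eq_square fps_mult_nth)
  then show ?thesis
    by (simp only: mult_2 distrib_right mult.commute[of "S $ n" "S $ 0"] add.assoc)
qed

lemma ex1_fps_sqrt:
  fixes W :: "'a::field_char_0 fps"
  assumes "s ^ 2 = W $ 0" and "s \<noteq> 0"
  shows "\<exists>!S. S ^ 2 = W \<and> S $ 0 = s"
  unfolding Suc_1[symmetric]
proof (rule ex1I)
  let ?R = "fps_radical (\<lambda>_ _. s) (Suc 1) W"
  have s: "s ^ Suc 1 = W $ 0"
    using assms(1) by (simp add: numeral_2_eq_2)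
  have W0: "W $ 0 \<noteq> 0"
    using assms by auto
  show "?R ^ Suc 1 = W \<and> ?R $ 0 = s"
    using power_radical[of W "\<lambda>_ _. s" 1, OF W0] s by simp
  show "S = ?R" if "S ^ Suc 1 = W \<and> S $ 0 = s" for S
    using radical_unique[of "\<lambda>_ _. s" 1 W S, OF s _ W0] that by simp
qed

text \<open>Solving \<open>S\<^sup>2 = 1 + Z\<close> coefficientwise, \<open>2 S\<^sub>0 S\<^sub>n\<close> is \<open>Z\<^sub>n\<close> minus products
  of earlier coefficients, and \<open>S\<^sub>0\<close> is a unit of order 0.\<close>

lemma weight_ge_sqrt:
  fixes S :: "'a::field_char_0 fls fps"
  assumes w: "0 < w" and sq: "weight_ge w (S ^ 2 - 1)" and S0: "fls_order_ge (S $ 0 - 1) w"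
  shows "weight_ge w (S - 1)"
proof -
  let ?c = "inverse (2 * S $ 0)"
  have "fls_order_ge (S $ 0 - 1) 0"
    using S0 w by (simp add: fls_order_ge_mono)
  then have "fls_order_ge (2 * S $ 0) 0"
    using fls_order_ge_mult[OF fls_order_ge_numeral fls_order_ge_add[OF _ fls_order_ge_1]] by fastforce
  moreover have "(S $ 0 - 1) $$ 0 = 0"
    using S0 w unfolding fls_order_ge_def by simp
  then have S00: "(2 * S $ 0) $$ 0 = 2"
    by simp
  ultimately have c: "fls_order_ge ?c 0"
    by (intro fls_order_ge_inverse) simp_all
  have nz: "2 * S $ 0 \<noteq> 0"
    using S00 by auto
  have tail: "fls_order_ge (S $ n) (w - 2 * int n)" if "n > 0" for n
    using that
  proof (induction n rule: less_induct)
    case (less n)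
    have "fls_order_ge ((S ^ 2 - 1) $ n) (w - 2 * int n)"
      using sq unfolding weight_ge_def by blast
    then have "fls_order_ge ((S ^ 2) $ n) (w - 2 * int n)"
      using less.prems by simp
    moreover have "fls_order_ge (S $ i * S $ (n - i)) (w - 2 * int n)" if "i \<in> {1..n-1}" for i
    proof -
      have "fls_order_ge (S $ i * S $ (n - i)) ((w - 2 * int i) + (w - 2 * int (n - i)))"
        using that by (intro fls_order_ge_mult less.IH) auto
      then show ?thesis
        by (rule fls_order_ge_mono) (use that w in auto)
    qed
    ultimately have "fls_order_ge ((S ^ 2) $ n - (\<Sum>i\<in>{1..n-1}. S $ i * S $ (n - i))) (w - 2 * int n)"
      by (intro fls_order_ge_diff fls_order_ge_sum)
    then have "fls_order_ge (?c * ((S ^ 2) $ n - (\<Sum>i\<in>{1..n-1}. S $ i * S $ (n - i)))) (w - 2 * int n)"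
      using fls_order_ge_mult[OF c] by fastforce
    moreover have "?c * ((S ^ 2) $ n - (\<Sum>i\<in>{1..n-1}. S $ i * S $ (n - i))) = ?c * (2 * S $ 0) * S $ n"
      by (simp add: fps_square_nth[OF less.prems] mult.assoc)
    moreover have "?c * (2 * S $ 0) * S $ n = S $ n"
      by (simp only: left_inverse[OF nz] mult_1_left)
    ultimately show ?case
      by (simp only:)
  qed
  show ?thesis
    unfolding weight_ge_def
  proof
    fix n
    show "fls_order_ge ((S - 1) $ n) (w - 2 * int n)"
      using S0 tail[of n] by (cases "n = 0") simp_all
  qed
qed

section \<open>Power series and binomial-coefficient polynomials\<close>

lemma fps_numeral_mult_nth: "(numeral k * F) $ n = numeral k * F $ n"
  by (simp add: fps_numeral_fps_const)

lemma fps_linear_power_nth: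
  fixes a b :: "'a::comm_ring_1"
  shows "((fps_const a + fps_const b * fps_X) ^ m) $ n = of_nat (m choose n) * a ^ (m - n) * b ^ n"
proof -
  have "(fps_const a + fps_const b * fps_X) ^ m
      = (\<Sum>k\<le>m. fps_const (of_nat (m choose k) * a ^ (m - k) * b ^ k) * fps_X ^ k)"
    unfolding add.commute[of "fps_const a"] binomial_ring
    by (simp add: power_mult_distrib mult_ac flip: fps_of_nat fps_const_mult)
  moreover have "(fps_const c * fps_X ^ k) $ n = (if k = n then c else 0)" for c :: 'a and k
    by simp
  ultimately show ?thesis
    by (auto simp add: fps_sum_nth binomial_eq_0)
qed

definition binomial_poly :: "nat \<Rightarrow> 'a::field_char_0 poly" where
  "binomial_poly i = smult (1 / fact i) (\<Prod>j=0..<i. [:- of_nat j, 1:])"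

lemma poly_binomial_poly: "poly (binomial_poly i) (of_nat k) = of_nat (k choose i)"
  unfolding binomial_poly_def binomial_gbinomial gbinomial_prod_rev
  by (simp add: poly_prod field_simps)

lemma degree_binomial_poly: "degree (binomial_poly i :: 'a::field_char_0 poly) = i"
  unfolding binomial_poly_def by (simp add: degree_prod_sum_eq)

lemma coeff_binomial_poly: "coeff (binomial_poly i :: 'a::field_char_0 poly) i = 1 / fact i"
proof -
  have "coeff (\<Prod>j=0..<i. [:- of_nat j, 1:] :: 'a poly) i = 1"
    using lead_coeff_prod[of "\<lambda>j. [:- of_nat j, 1:] :: 'a poly" "{0..<i}"]
    by (subst (asm) degree_prod_sum_eq) auto
  then show ?thesis
    unfolding binomial_poly_def by simp
qed

lemma binomial_poly_combination:
  fixes c :: "nat \<Rightarrow> 'a::field_char_0"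
  assumes "c m \<noteq> 0"
  shows "(\<Sum>i\<le>m. smult (c i) (binomial_poly i)) \<noteq> 0"
    and "degree (\<Sum>i\<le>m. smult (c i) (binomial_poly i)) = m"
proof -
  let ?P = "\<Sum>i\<le>m. smult (c i) (binomial_poly i)"
  have "coeff ?P m = (\<Sum>i\<le>m. c i * coeff (binomial_poly i) m)"
    by (simp add: coeff_sum)
  also have "\<dots> = c m / fact m"
    by (subst sum.remove[of _ m]) (auto simp: coeff_binomial_poly coeff_eq_0 degree_binomial_poly intro!: sum.neutral)
  finally have "coeff ?P m \<noteq> 0"
    using assms by simp
  moreover have "degree ?P \<le> m"
    by (intro degree_sum_le) (auto intro: order.trans[OF degree_smult_le] simp: degree_binomial_poly)
  ultimately show "?P \<noteq> 0" and "degree ?P = m"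
    by (auto intro: antisym le_degree)
qed

section \<open>The square root of \<open>\<wp> - 4 G\<^sub>2\<close>\<close>

text \<open>Stated over an arbitrary field because in \<open>rat fls\<close> the simplifier rewrites \<open>fls_X\<close> to
  \<open>fls_shift 1 1\<close>, which \<open>field_simps\<close> cannot handle; naming \<open>a = 1 - x\<close> lets it see
  that the denominators are nonzero.\<close>

lemma wp_constant_term_identities:
  fixes x :: "'a::field_char_0"
  assumes x: "x \<noteq> 0" and x1: "1 - x \<noteq> 0"
  defines "p \<equiv> inverse x"
  shows "1/12 + p / (1 - p)\<^sup>2 + 1/6 = ((1/2) * (p + 1) / (p - 1))\<^sup>2"
    and "2 * ((1/2) * (p + 1) / (p - 1)) - 1 = 2 * x / (1 - x)"
    and "4 * (1/12 + p / (1 - p)\<^sup>2 + 1/6) - 1 - 4 * x = x\<^sup>2 * (8 - 4 * x) / (1 - x)\<^sup>2"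
proof -
  obtain a b where a: "a = 1 - x" and b: "b = 1 + x"
    by blast
  have a0: "a \<noteq> 0"
    using a x1 by simp
  have p: "p - 1 = a / x" "1 - p = - (a / x)" "p + 1 = b / x" "1 - x = a"
    using x unfolding p_def a b by (simp_all add: field_simps)
  show "1/12 + p / (1 - p)\<^sup>2 + 1/6 = ((1/2) * (p + 1) / (p - 1))\<^sup>2"
    unfolding p unfolding p_def using x a0 by (simp add: field_simps power2_eq_square) (simp add: a b algebra_simps)
  show "2 * ((1/2) * (p + 1) / (p - 1)) - 1 = 2 * x / (1 - x)"
    unfolding p unfolding p_def using x a0 by (simp add: field_simps) (simp add: a b algebra_simps)
  show "4 * (1/12 + p / (1 - p)\<^sup>2 + 1/6) - 1 - 4 * x = x\<^sup>2 * (8 - 4 * x) / (1 - x)\<^sup>2"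
    unfolding p unfolding p_def using x a0 by (simp add: field_simps power2_eq_square) (simp add: a b algebra_simps)
qed

lemma one_minus_fls_X_nonzero: "1 - fls_X \<noteq> (0 :: 'a::ring_1 fls)"
proof
  assume "1 - fls_X = (0 :: 'a fls)"
  then have "(1 - fls_X :: 'a fls) $$ 0 = 0"
    by simp
  then show False
    by simp
qed

lemmas wp_constant_term_identities_fls =
  wp_constant_term_identities[OF fls_X_nonzero one_minus_fls_X_nonzero, unfolded fls_inverse_X]

lemma wp_G2_nth_0: "(wp - 4 * G2) $ 0 = 1/12 + pvar / (1 - pvar)\<^sup>2 + 1/6"
  by (simp add: wp_def G2_def fps_numeral_fps_const)

lemma wp_G2_nth:
  assumes "n > 0"
  shows "(wp - 4 * G2) $ n
    = (\<Sum>k | k dvd n. of_nat k * (pvar ^ k - 2 + fls_X ^ k)) - 4 * of_nat (sigma1 n)"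
  using assms
  by (simp add: wp_def G2_def fps_numeral_fps_const fls_inverse_X_inv power_inverse[symmetric])

lemma wp_G2_nth_1: "(wp - 4 * G2) $ 1 = pvar - 6 + fls_X"
proof -
  have "{k. k dvd (1::nat)} = {1}" and "sigma1 1 = 1"
    by (auto simp: sigma1_def)
  then show ?thesis
    unfolding wp_G2_nth[OF zero_less_one] by simp
qed

lemma fls_order_ge_wp_G2_nth:
  assumes "n > 0"
  shows "fls_order_ge ((wp - 4 * G2) $ n) (- int n)"
  unfolding wp_G2_nth[OF assms]
proof (intro fls_order_ge_diff fls_order_ge_sum)
  fix k assume "k \<in> {k. k dvd n}"
  then have "k \<le> n"
    using assms by (simp add: dvd_imp_le)
  then have "fls_order_ge (pvar ^ k - 2 + fls_X ^ k) (- int n)"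
    by (intro fls_order_ge_add fls_order_ge_diff)
      (auto intro: fls_order_ge_mono[OF fls_order_ge_X_inv_power] fls_order_ge_mono[OF fls_order_ge_numeral]
        fls_order_ge_mono[OF fls_order_ge_X_power])
  then show "fls_order_ge (of_nat k * (pvar ^ k - 2 + fls_X ^ k)) (- int n)"
    using fls_order_ge_mult[OF fls_order_ge_of_nat] by fastforce
next
  show "fls_order_ge (4 * of_nat (sigma1 n) :: rat fls) (- int n)"
  proof (rule fls_order_ge_mono)
    show "fls_order_ge (4 * of_nat (sigma1 n) :: rat fls) (0 + 0)"
      by (intro fls_order_ge_mult fls_order_ge_numeral fls_order_ge_of_nat)
  qed simp
qed

definition sqrtW0 :: "rat fls" where
  "sqrtW0 = (1/2) * (pvar + 1) / (pvar - 1)"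

lemma fls_order_ge_inverse_one_minus_X: "fls_order_ge (inverse (1 - fls_X :: 'a::field fls)) 0"
proof (rule fls_order_ge_inverse)
  show "fls_order_ge (1 - fls_X :: 'a fls) 0"
    by (rule fls_order_ge_diff[OF fls_order_ge_1 fls_order_ge_mono[OF fls_order_ge_X]]) simp
qed simp

lemma fls_order_ge_two_sqrtW0: "fls_order_ge (2 * sqrtW0 - 1) 1"
proof -
  have "fls_order_ge (2 * fls_X * inverse (1 - fls_X) :: rat fls) (0 + 1 + 0)"
    by (intro fls_order_ge_mult fls_order_ge_numeral fls_order_ge_X fls_order_ge_inverse_one_minus_X)
  then show ?thesis
    unfolding sqrtW0_def wp_constant_term_identities_fls(2) by (simp add: divide_inverse)
qed

lemma sqrtW0_nonzero: "sqrtW0 \<noteq> 0"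
proof
  assume "sqrtW0 = 0"
  then have "fls_order_ge (- 1 :: rat fls) 1"
    using fls_order_ge_two_sqrtW0 by simp
  then have "(- 1 :: rat fls) $$ 0 = 0"
    unfolding fls_order_ge_def using zero_less_one by blast
  then show False
    by simp
qed

lemma sqrtW_square: "sqrtW\<^sup>2 = wp - 4 * G2"
  and sqrtW_nth_0: "sqrtW $ 0 = sqrtW0"
proof -
  have "sqrtW0\<^sup>2 = (wp - 4 * G2) $ 0"
    unfolding wp_G2_nth_0 sqrtW0_def by (rule wp_constant_term_identities_fls(1)[symmetric])
  then have "\<exists>!S. S\<^sup>2 = wp - 4 * G2 \<and> S $ 0 = sqrtW0"
    using sqrtW0_nonzero by (rule ex1_fps_sqrt)
  then have "sqrtW\<^sup>2 = wp - 4 * G2 \<and> sqrtW $ 0 = sqrtW0"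
    unfolding sqrtW_def sqrtW0_def by (rule theI')
  then show "sqrtW\<^sup>2 = wp - 4 * G2" and "sqrtW $ 0 = sqrtW0"
    by auto
qed

definition Zser :: "rat fls fps" where
  "Zser = 4 * (wp - 4 * G2) - 1"

text \<open>The part of \<open>Zser\<close> of weight exactly 1, namely \<open>4 p\<^sup>-\<^sup>1 + 4 p q\<close>.\<close>

definition Zlead :: "rat fls fps" where
  "Zlead = fps_const (4 * fls_X) + fps_const (4 * pvar) * fps_X"

lemma two_sqrtW_square: "(2 * sqrtW)\<^sup>2 = Zser + 1"
  unfolding Zser_def by (simp add: power_mult_distrib sqrtW_square)

lemma Zser_nth: "Zser $ n = 4 * (wp - 4 * G2) $ n - (if n = 0 then 1 else 0)"
  unfolding Zser_def fps_sub_nth[of "4 * (wp - 4 * G2)"] fps_numeral_mult_nth fps_one_nth ..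

lemma Zlead_nth: "Zlead $ n = (if n = 0 then 4 * fls_X else if n = 1 then 4 * pvar else 0)"
  by (simp add: Zlead_def)

lemma weight_ge_Zlead: "weight_ge 1 Zlead"
  unfolding weight_ge_def Zlead_nth
proof
  fix n
  have "fls_order_ge (4 * fls_X :: rat fls) (0 + 1)" and "fls_order_ge (4 * pvar) (0 + - 1)"
    by (intro fls_order_ge_mult fls_order_ge_numeral fls_order_ge_X
        fls_order_ge_X_inv_power[of 1, simplified])+
  then show "fls_order_ge (if n = 0 then 4 * fls_X else if n = 1 then 4 * pvar else 0) (1 - 2 * int n)"
    by (auto elim: fls_order_ge_mono)
qed

lemma weight_ge_Zser_minus_Zlead: "weight_ge 2 (Zser - Zlead)"
  unfolding weight_ge_def
proof
  fix n :: nat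
  consider "n = 0" | "n = 1" | "n \<ge> 2"
    by linarith
  then show "fls_order_ge ((Zser - Zlead) $ n) (2 - 2 * int n)"
  proof cases
    case 1
    have "fls_order_ge (inverse (1 - fls_X) ^ 2 :: rat fls) (int 2 * 0)"
      by (intro fls_order_ge_power fls_order_ge_inverse_one_minus_X)
    moreover have "fls_order_ge (8 - 4 * fls_X :: rat fls) 0"
      by (intro fls_order_ge_diff fls_order_ge_numeral
          fls_order_ge_mono[OF fls_order_ge_mult[OF fls_order_ge_numeral fls_order_ge_X]]) simp
    ultimately have "fls_order_ge (fls_X\<^sup>2 * (8 - 4 * fls_X) * inverse (1 - fls_X) ^ 2 :: rat fls)
        (int 2 + 0 + 0)"
      by (intro fls_order_ge_mult fls_order_ge_X_power) simp_all
    moreover have "(Zser - Zlead) $ 0 = fls_X\<^sup>2 * (8 - 4 * fls_X) / (1 - fls_X)\<^sup>2"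
      unfolding fps_sub_nth[of Zser] Zser_nth Zlead_nth wp_G2_nth_0
        wp_constant_term_identities_fls(3)[symmetric] by simp
    ultimately show ?thesis
      unfolding 1 by (simp add: divide_inverse power_inverse)
  next
    case 2
    have "(Zser - Zlead) $ 1 = 4 * fls_X - 24"
      unfolding fps_sub_nth[of Zser] Zser_nth Zlead_nth wp_G2_nth_1 by (simp add: algebra_simps)
    moreover have "fls_order_ge (4 * fls_X - 24 :: rat fls) 0"
      by (intro fls_order_ge_diff fls_order_ge_numeral
          fls_order_ge_mono[OF fls_order_ge_mult[OF fls_order_ge_numeral fls_order_ge_X]]) simp
    ultimately show ?thesis
      unfolding 2 by simp
  next
    case 3
    then have eq: "(Zser - Zlead) $ n = 4 * (wp - 4 * G2) $ n"
      unfolding fps_sub_nth[of Zser] Zser_nth Zlead_nth by simp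
    have "fls_order_ge (4 * (wp - 4 * G2) $ n) (0 + - int n)"
      using 3 by (intro fls_order_ge_mult fls_order_ge_numeral fls_order_ge_wp_G2_nth) simp
    then show ?thesis
      unfolding eq by (rule fls_order_ge_mono) (use 3 in simp)
  qed
qed

lemma weight_ge_Zser: "weight_ge 1 Zser"
  using weight_ge_add[OF weight_ge_mono[OF weight_ge_Zser_minus_Zlead] weight_ge_Zlead] by simp

lemma weight_ge_two_sqrtW_minus_1: "weight_ge 1 (2 * sqrtW - 1)"
proof (rule weight_ge_sqrt)
  show "weight_ge 1 ((2 * sqrtW)\<^sup>2 - 1)"
    using weight_ge_Zser unfolding two_sqrtW_square by simp
  show "fls_order_ge ((2 * sqrtW) $ 0 - 1) 1"
    using fls_order_ge_two_sqrtW0 by (simp add: sqrtW_nth_0 fps_numeral_mult_nth)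
qed simp

lemma weight_ge_two_sqrtW: "weight_ge 0 (2 * sqrtW)"
  using weight_ge_add[OF weight_ge_mono[OF weight_ge_two_sqrtW_minus_1] weight_ge_1] by simp

section \<open>Constant terms of the odd powers\<close>

definition expansion_coeff :: "nat \<Rightarrow> nat \<Rightarrow> rat" where
  "expansion_coeff n i = (2 * sqrtW * Zser ^ i) $ n $$ 0"

lemma two_sqrtW_odd_power:
  "(2 * sqrtW) ^ (2 * k + 1) = (\<Sum>i\<le>k. of_nat (k choose i) * (2 * sqrtW * Zser ^ i))"
proof -
  have "(2 * sqrtW) ^ (2 * k + 1) = 2 * sqrtW * ((2 * sqrtW)\<^sup>2) ^ k"
    unfolding power_add power_one_right power_mult by (rule mult.commute)
  also have "\<dots> = 2 * sqrtW * (Zser + 1) ^ k"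
    unfolding two_sqrtW_square ..
  also have "\<dots> = (\<Sum>i\<le>k. of_nat (k choose i) * (2 * sqrtW * Zser ^ i))"
    unfolding binomial_ring by (simp add: sum_distrib_left mult.left_commute)
  finally show ?thesis .
qed

lemma two_power_mult_nth: "((2 :: 'a::comm_ring_1 fls fps) ^ m * F) $ n $$ k = 2 ^ m * F $ n $$ k"
proof -
  have two_power: "(2 :: 'a fls fps) ^ m = fps_const (fls_const (2 ^ m))"
    by (simp add: fps_numeral_fps_const fls_const_power)
  show ?thesis
    unfolding two_power fps_mult_left_const_nth fls_mult_const_nth ..
qed

lemma sqrtW_odd_power_nth:
  "2 ^ (2 * k + 1) * (sqrtW ^ (2 * k + 1)) $ n $$ 0
    = (\<Sum>i\<le>k. of_nat (k choose i) * expansion_coeff n i)"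
proof -
  have "2 ^ (2 * k + 1) * (sqrtW ^ (2 * k + 1)) $ n $$ 0 = ((2 * sqrtW) ^ (2 * k + 1)) $ n $$ 0"
    by (simp only: power_mult_distrib two_power_mult_nth)
  also have "\<dots> = (\<Sum>i\<le>k. of_nat (k choose i) * expansion_coeff n i)"
    unfolding two_sqrtW_odd_power fps_sum_nth fls_nth_sum expansion_coeff_def
    by (simp add: fps_of_nat[symmetric])
  finally show ?thesis .
qed

lemma expansion_coeff_eq_0:
  assumes "2 * n < i"
  shows "expansion_coeff n i = 0"
proof -
  have "weight_ge (0 + int i * 1) (2 * sqrtW * Zser ^ i)"
    by (intro weight_ge_mult weight_ge_two_sqrtW weight_ge_power weight_ge_Zser)
  then show ?thesis
    unfolding expansion_coeff_def by (rule weight_ge_nth_eq_0) (use assms in simp)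
qed

lemma expansion_coeff_top: "expansion_coeff n (2 * n) = of_nat ((2 * n) choose n) * 16 ^ n"
proof -
  define m where "m = 2 * n"
  have "weight_ge (int m * 1 + 1) (Zser ^ m - Zlead ^ m)"
    using weight_ge_Zser_minus_Zlead
    by (intro weight_ge_power_diff weight_ge_Zser weight_ge_Zlead) simp
  then have "weight_ge (0 + (int m * 1 + 1)) (2 * sqrtW * (Zser ^ m - Zlead ^ m))"
    by (intro weight_ge_mult weight_ge_two_sqrtW)
  moreover have "weight_ge (1 + int m * 1) ((2 * sqrtW - 1) * Zlead ^ m)"
    by (intro weight_ge_mult weight_ge_two_sqrtW_minus_1 weight_ge_power weight_ge_Zlead)
  ultimately have "weight_ge (int m + 1) (2 * sqrtW * Zser ^ m - Zlead ^ m)"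
    using weight_ge_add by (fastforce simp: algebra_simps)
  then have "(2 * sqrtW * Zser ^ m - Zlead ^ m) $ n $$ 0 = 0"
    by (rule weight_ge_nth_eq_0) (simp add: m_def)
  then have "expansion_coeff n m = (Zlead ^ m) $ n $$ 0"
    unfolding expansion_coeff_def by simp
  also have "(Zlead ^ m) $ n = of_nat (m choose n) * ((4 * fls_X) ^ n * (4 * pvar) ^ n)"
    unfolding Zlead_def fps_linear_power_nth by (simp add: m_def mult.assoc)
  also have "(4 * fls_X) ^ n * (4 * pvar) ^ n = (16 :: rat fls) ^ n"
  proof -
    have "(4 * fls_X) * (4 * pvar) = (16 :: rat fls)"
      by (simp add: fls_inverse_X[symmetric])
    then show ?thesis
      unfolding power_mult_distrib[symmetric] by simp
  qed
  finally show ?thesis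
    by (simp add: m_def fls_of_nat_nth flip: fls_const_power fls_const_numeral)
qed

theorem lemma3p4:
  shows "\<exists>P :: nat \<Rightarrow> rat poly.
           (\<forall>n. P n \<noteq> 0 \<and> degree (P n) = 2 * n) \<and>
           (\<forall>k::nat. const_p (sqrtW ^ (2 * k + 1)) =
              fps_const (1 / 2 ^ (2 * k + 1)) * Abs_fps (\<lambda>n. poly (P n) (of_nat k)))"
proof -
  define P where "P n = (\<Sum>i\<le>2 * n. smult (expansion_coeff n i) (binomial_poly i))" for n
  have P: "P n \<noteq> 0 \<and> degree (P n) = 2 * n" for n
    using binomial_poly_combination[of "expansion_coeff n" "2 * n"]
    unfolding P_def by (simp add: expansion_coeff_top)
  have poly_P: "poly (P n) (of_nat k) = 2 ^ (2 * k + 1) * (sqrtW ^ (2 * k + 1)) $ n $$ 0" for k n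
  proof -
    let ?U = "{..max k (2 * n)}"
    have "poly (P n) (of_nat k) = (\<Sum>i\<in>?U. of_nat (k choose i) * expansion_coeff n i)"
      unfolding P_def poly_sum poly_smult poly_binomial_poly
      by (intro sum.mono_neutral_cong_left) (auto simp: expansion_coeff_eq_0)
    also have "\<dots> = (\<Sum>i\<le>k. of_nat (k choose i) * expansion_coeff n i)"
      by (intro sum.mono_neutral_right) auto
    finally show ?thesis
      unfolding sqrtW_odd_power_nth .
  qed
  have "const_p (sqrtW ^ (2 * k + 1)) =
      fps_const (1 / 2 ^ (2 * k + 1)) * Abs_fps (\<lambda>n. poly (P n) (of_nat k))" for k
    by (intro fps_ext) (simp add: const_p_def poly_P)
  with P show ?thesis
    by blast
qed

end
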